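(* Let $K$ be a field of characteristic $0$, let $L=\mathcal{L}(x,y)$ be the free Lie algebra over $K$ freely generated by $x,y$, let $\delta$ be the derivation of $L$ with $\delta(x)=0$, $\delta(y)=x$, and $L^\delta=\ker\delta$. Let $f\in L$ with $\deg_y(f)=2$. Then $f\in L^\delta$ if and only if $f$ belongs to the Lie subalgebra of $L$ generated by $x$ and $[y,x]$. *)

theory Defs
  imports Main "HOL-Library.Function_Algebras"
begin

text \<open>Free associative algebra K<x,y> on two generators, modelled as coefficient
functions on words (lists of generators); the free Lie algebra L(x,y) is modelled
as the Lie subalgebra of K<x,y> generated by x and y (Lie polynomials).\<close>

datatype gen = GX | GY

type_synonym 'k ncpoly = "gen list \<Rightarrow> 'k"

definition nc_gen :: "gen \<Rightarrow> 'k::field ncpoly" where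
  "nc_gen g = (\<lambda>w. if w = [g] then 1 else 0)"

definition xg :: "'k::field ncpoly" where "xg = nc_gen GX"
definition yg :: "'k::field ncpoly" where "yg = nc_gen GY"

definition nc_mult :: "'k::field ncpoly \<Rightarrow> 'k ncpoly \<Rightarrow> 'k ncpoly" where
  "nc_mult p q = (\<lambda>w. \<Sum>i\<in>{0..length w}. p (take i w) * q (drop i w))"

definition lie_bracket :: "'k::field ncpoly \<Rightarrow> 'k ncpoly \<Rightarrow> 'k ncpoly" where
  "lie_bracket p q = nc_mult p q - nc_mult q p"

inductive_set lie_span :: "'k::field ncpoly set \<Rightarrow> 'k ncpoly set" for S where
  gen: "s \<in> S \<Longrightarrow> s \<in> lie_span S"
| zero: "0 \<in> lie_span S"
| add: "p \<in> lie_span S \<Longrightarrow> q \<in> lie_span S \<Longrightarrow> p + q \<in> lie_span S"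
| smult: "p \<in> lie_span S \<Longrightarrow> (\<lambda>w. c * p w) \<in> lie_span S"
| bracket: "p \<in> lie_span S \<Longrightarrow> q \<in> lie_span S \<Longrightarrow> lie_bracket p q \<in> lie_span S"

definition free_lie :: "'k::field ncpoly set" where
  "free_lie = lie_span {xg, yg}"

text \<open>The derivation delta with delta(x) = 0, delta(y) = x (extended to K<x,y>):
  delta(word u) = sum over positions j with u!j = y of u[j := x].\<close>
definition delta :: "'k::field ncpoly \<Rightarrow> 'k ncpoly" where
  "delta p = (\<lambda>w. \<Sum>i\<in>{i. i < length w \<and> w ! i = GX}. p (w[i := GY]))"

definition deg_y :: "'k::field ncpoly \<Rightarrow> nat" where
  "deg_y p = (if p = 0 then 0 else Max ((\<lambda>w. count_list w GY) ` {w. p w \<noteq> 0}))"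

end

theory Submission
  imports Defs
begin

text \<open>Truncate at y-degree 2. The truncation of a bracket only depends on the truncations
of its arguments, and the truncated brackets of x, y, the elements [y,v] and the elements v, u
(where v, u are y-homogeneous of degree 1, 2 in the subalgebra T = L_x_yx generated by x
and [y,x]) stay in the linear span of these generators. Hence a Lie element f of y-degree 2
has the form a x + b y + [y,v] + t with t in T and v in T of y-degree 1. As \<delta> kills T,
\<delta> f = b x + [x,v]; the coefficient of the word x gives b = 0, and [x,v] = 0 forces v = 0
because the centraliser of x contains no word with a y. So f = a x + t lies in T.\<close>

definition nc_smult :: "'k::field \<Rightarrow> 'k ncpoly \<Rightarrow> 'k ncpoly" where
  "nc_smult c p = (\<lambda>w. c * p w)"

lemma nc_smult_zero [simp]: "nc_smult c 0 = 0"
  by (simp add: nc_smult_def fun_eq_iff)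

lemma nc_smult_0 [simp]: "nc_smult 0 p = 0"
  by (simp add: nc_smult_def fun_eq_iff)

lemma nc_smult_one [simp]: "nc_smult 1 p = p"
  by (simp add: nc_smult_def)

lemma lie_span_nc_smult: "p \<in> lie_span S \<Longrightarrow> nc_smult c p \<in> lie_span S"
  unfolding nc_smult_def by (rule lie_span.smult)

lemma nc_mult_Nil: "nc_mult p q [] = p [] * q []"
  by (simp add: nc_mult_def)

lemma nc_mult_Cons: "nc_mult p q (a # w) = p [] * q (a # w) + nc_mult (\<lambda>u. p (a # u)) q w"
proof -
  have "nc_mult p q (a # w) = (\<Sum>i\<in>{0..Suc (length w)}. p (take i (a # w)) * q (drop i (a # w)))"
    by (simp add: nc_mult_def)
  also have "\<dots> = p [] * q (a # w) + (\<Sum>i\<in>{0..length w}. p (a # take i w) * q (drop i w))"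
    by (subst sum.atLeast0_atMost_Suc_shift) (simp add: o_def)
  finally show ?thesis by (simp add: nc_mult_def)
qed

lemma nc_mult_add_left: "nc_mult (p + q) r = nc_mult p r + nc_mult q r"
  by (simp add: nc_mult_def fun_eq_iff distrib_right sum.distrib)

lemma nc_mult_add_right: "nc_mult r (p + q) = nc_mult r p + nc_mult r q"
  by (simp add: nc_mult_def fun_eq_iff distrib_left sum.distrib)

lemma nc_mult_diff_left: "nc_mult (p - q) r = nc_mult p r - nc_mult q r"
  by (simp add: nc_mult_def fun_eq_iff left_diff_distrib sum_subtractf)

lemma nc_mult_diff_right: "nc_mult r (p - q) = nc_mult r p - nc_mult r q"
  by (simp add: nc_mult_def fun_eq_iff right_diff_distrib sum_subtractf)

lemma nc_mult_smult_left: "nc_mult (nc_smult c p) r = nc_smult c (nc_mult p r)"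
  by (simp add: nc_mult_def nc_smult_def fun_eq_iff sum_distrib_left mult.assoc)

lemma nc_mult_smult_right: "nc_mult r (nc_smult c p) = nc_smult c (nc_mult r p)"
  by (simp add: nc_mult_def nc_smult_def fun_eq_iff sum_distrib_left algebra_simps)

lemma nc_mult_zero_left: "nc_mult 0 r = 0"
  by (simp add: nc_mult_def fun_eq_iff)

lemma nc_mult_zero_right: "nc_mult r 0 = 0"
  by (simp add: nc_mult_def fun_eq_iff)

lemma nc_mult_assoc: "nc_mult (nc_mult p q) r = nc_mult p (nc_mult q r)"
proof
  fix w show "nc_mult (nc_mult p q) r w = nc_mult p (nc_mult q r) w"
  proof (induction w arbitrary: p)
    case Nil
    show ?case by (simp add: nc_mult_Nil)
  next
    case (Cons a w)
    have tail: "(\<lambda>u. nc_mult p q (a # u)) = nc_smult (p []) (\<lambda>u. q (a # u)) + nc_mult (\<lambda>u. p (a # u)) q"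
      by (simp add: fun_eq_iff nc_smult_def nc_mult_Cons)
    have "nc_mult (nc_mult p q) r (a # w) = p [] * q [] * r (a # w)
        + p [] * nc_mult (\<lambda>u. q (a # u)) r w + nc_mult (nc_mult (\<lambda>u. p (a # u)) q) r w"
      by (simp only: nc_mult_Cons[of "nc_mult p q"] tail nc_mult_add_left nc_mult_smult_left)
        (simp add: nc_mult_Nil nc_smult_def algebra_simps)
    also have "\<dots> = nc_mult p (nc_mult q r) (a # w)"
      using Cons.IH[of "\<lambda>u. p (a # u)"] by (simp add: nc_mult_Cons nc_mult_Nil algebra_simps)
    finally show ?case .
  qed
qed

lemma nc_mult_support:
  "{w. nc_mult p q w \<noteq> 0} \<subseteq> (\<lambda>(u, v). u @ v) ` ({u. p u \<noteq> 0} \<times> {v. q v \<noteq> 0})"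
proof
  fix w assume "w \<in> {w. nc_mult p q w \<noteq> 0}"
  then obtain i where "p (take i w) * q (drop i w) \<noteq> 0"
    unfolding nc_mult_def by (auto elim: sum.not_neutral_contains_not_neutral)
  then show "w \<in> (\<lambda>(u, v). u @ v) ` ({u. p u \<noteq> 0} \<times> {v. q v \<noteq> 0})"
    by (auto intro!: image_eqI[of _ _ "(take i w, drop i w)"])
qed

lemma lie_bracket_add_left: "lie_bracket (p + q) r = lie_bracket p r + lie_bracket q r"
  by (simp add: lie_bracket_def nc_mult_add_left nc_mult_add_right)

lemma lie_bracket_add_right: "lie_bracket r (p + q) = lie_bracket r p + lie_bracket r q"
  by (simp add: lie_bracket_def nc_mult_add_left nc_mult_add_right)

lemma lie_bracket_smult_left: "lie_bracket (nc_smult c p) r = nc_smult c (lie_bracket p r)"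
  unfolding lie_bracket_def nc_mult_smult_left nc_mult_smult_right
  by (simp add: nc_smult_def fun_eq_iff algebra_simps)

lemma lie_bracket_smult_right: "lie_bracket r (nc_smult c p) = nc_smult c (lie_bracket r p)"
  unfolding lie_bracket_def nc_mult_smult_left nc_mult_smult_right
  by (simp add: nc_smult_def fun_eq_iff algebra_simps)

lemma lie_bracket_zero_left [simp]: "lie_bracket 0 r = 0"
  by (simp add: lie_bracket_def nc_mult_zero_left nc_mult_zero_right)

lemma lie_bracket_zero_right [simp]: "lie_bracket r 0 = 0"
  by (simp add: lie_bracket_def nc_mult_zero_left nc_mult_zero_right)

lemma lie_bracket_self [simp]: "lie_bracket p p = 0"
  by (simp add: lie_bracket_def)

lemma lie_bracket_antisym: "lie_bracket q p = nc_smult (-1) (lie_bracket p q)"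
  by (simp add: lie_bracket_def nc_smult_def fun_eq_iff)

lemma lie_bracket_jacobi:
  "lie_bracket a (lie_bracket b c) = lie_bracket (lie_bracket a b) c + lie_bracket b (lie_bracket a c)"
  by (simp add: lie_bracket_def nc_mult_diff_left nc_mult_diff_right nc_mult_assoc algebra_simps)

lemma lie_span_finite_support:
  assumes "\<And>s. s \<in> S \<Longrightarrow> finite {w. s w \<noteq> 0}" and "p \<in> lie_span S"
  shows "finite {w. p w \<noteq> 0}"
  using assms(2)
proof induction
  case (add p q)
  have "{w. (p + q) w \<noteq> 0} \<subseteq> {w. p w \<noteq> 0} \<union> {w. q w \<noteq> 0}" by auto
  then show ?case by (rule finite_subset) (simp add: add.IH)
next
  case (bracket p q)
  have "finite {w. nc_mult p q w \<noteq> 0}" "finite {w. nc_mult q p w \<noteq> 0}"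
    using bracket.IH by (auto intro: finite_subset[OF nc_mult_support])
  moreover have "{w. lie_bracket p q w \<noteq> 0} \<subseteq> {w. nc_mult p q w \<noteq> 0} \<union> {w. nc_mult q p w \<noteq> 0}"
    by (auto simp: lie_bracket_def)
  ultimately show ?case by (simp add: finite_subset)
qed (auto simp: assms(1) elim: rev_finite_subset)

subsection \<open>Degree in y: homogeneous components and truncation\<close>

definition y_homogeneous :: "nat \<Rightarrow> 'k::field ncpoly \<Rightarrow> bool" where
  "y_homogeneous k p \<longleftrightarrow> (\<forall>w. p w \<noteq> 0 \<longrightarrow> count_list w GY = k)"

definition y_trunc :: "nat \<Rightarrow> 'k::field ncpoly \<Rightarrow> 'k ncpoly" where
  "y_trunc k p = (\<lambda>w. if count_list w GY \<le> k then p w else 0)"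

lemma y_homogeneous_zero: "y_homogeneous k 0"
  by (simp add: y_homogeneous_def)

lemma y_homogeneous_add: "y_homogeneous k p \<Longrightarrow> y_homogeneous k q \<Longrightarrow> y_homogeneous k (p + q)"
  unfolding y_homogeneous_def by (metis add_0 plus_fun_apply)

lemma y_homogeneous_diff: "y_homogeneous k p \<Longrightarrow> y_homogeneous k q \<Longrightarrow> y_homogeneous k (p - q)"
  unfolding y_homogeneous_def by (metis diff_self minus_apply)

lemma y_homogeneous_smult: "y_homogeneous k p \<Longrightarrow> y_homogeneous k (nc_smult c p)"
  by (simp add: y_homogeneous_def nc_smult_def)

lemma y_homogeneous_nc_mult:
  assumes "y_homogeneous j p" "y_homogeneous k q"
  shows "y_homogeneous (j + k) (nc_mult p q)"
  unfolding y_homogeneous_def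
proof (intro allI impI)
  fix w assume "nc_mult p q w \<noteq> 0"
  then have "w \<in> (\<lambda>(u, v). u @ v) ` ({u. p u \<noteq> 0} \<times> {v. q v \<noteq> 0})"
    using subsetD[OF nc_mult_support[of p q]] by simp
  then obtain u v where "w = u @ v" "p u \<noteq> 0" "q v \<noteq> 0"
    by auto
  with assms show "count_list w GY = j + k"
    by (simp add: y_homogeneous_def)
qed

lemma y_homogeneous_lie_bracket:
  assumes "y_homogeneous j p" "y_homogeneous k q"
  shows "y_homogeneous (j + k) (lie_bracket p q)"
proof -
  have "y_homogeneous (j + k) (nc_mult q p)"
    using y_homogeneous_nc_mult[OF assms(2,1)] by (simp add: add.commute)
  with y_homogeneous_nc_mult[OF assms] show ?thesis
    unfolding lie_bracket_def by (rule y_homogeneous_diff)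
qed

lemma y_homogeneous_xg: "y_homogeneous 0 xg"
  by (simp add: y_homogeneous_def xg_def nc_gen_def)

lemma y_homogeneous_yg: "y_homogeneous 1 yg"
  by (simp add: y_homogeneous_def yg_def nc_gen_def)

lemma y_trunc_zero [simp]: "y_trunc k 0 = 0"
  by (simp add: y_trunc_def fun_eq_iff)

lemma y_trunc_add: "y_trunc k (p + q) = y_trunc k p + y_trunc k q"
  by (simp add: y_trunc_def fun_eq_iff)

lemma y_trunc_diff: "y_trunc k (p - q) = y_trunc k p - y_trunc k q"
  by (simp add: y_trunc_def fun_eq_iff)

lemma y_trunc_smult: "y_trunc k (nc_smult c p) = nc_smult c (y_trunc k p)"
  by (simp add: y_trunc_def nc_smult_def fun_eq_iff)

lemma y_trunc_homogeneous_low: "y_homogeneous j p \<Longrightarrow> j \<le> k \<Longrightarrow> y_trunc k p = p"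
  by (auto simp: y_trunc_def y_homogeneous_def fun_eq_iff)

lemma y_trunc_homogeneous_high: "y_homogeneous j p \<Longrightarrow> k < j \<Longrightarrow> y_trunc k p = 0"
  by (auto simp: y_trunc_def y_homogeneous_def fun_eq_iff)

lemma y_trunc_eq_self:
  assumes "finite {w. p w \<noteq> 0}" and "deg_y p \<le> k"
  shows "y_trunc k p = p"
proof
  fix w
  show "y_trunc k p w = p w"
  proof (cases "p w = 0")
    case False
    then have "count_list w GY \<le> Max ((\<lambda>w. count_list w GY) ` {w. p w \<noteq> 0})"
      using assms(1) by (intro Max_ge) auto
    also have "\<dots> \<le> k"
      using assms(2) False by (auto simp: deg_y_def split: if_splits)
    finally show ?thesis by (simp add: y_trunc_def)
  qed (simp add: y_trunc_def)
qed

lemma y_trunc_nc_mult: "y_trunc k (nc_mult p q) = y_trunc k (nc_mult (y_trunc k p) (y_trunc k q))"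
proof
  fix w
  show "y_trunc k (nc_mult p q) w = y_trunc k (nc_mult (y_trunc k p) (y_trunc k q)) w"
  proof (cases "count_list w GY \<le> k")
    case True
    have "count_list (take i w) GY \<le> k \<and> count_list (drop i w) GY \<le> k" for i
      using True count_list_append[of "take i w" "drop i w" GY] by simp
    then show ?thesis by (simp add: y_trunc_def nc_mult_def)
  qed (simp add: y_trunc_def)
qed

lemma y_trunc_lie_bracket:
  "y_trunc k (lie_bracket p q) = y_trunc k (lie_bracket (y_trunc k p) (y_trunc k q))"
  unfolding lie_bracket_def y_trunc_diff by (metis y_trunc_nc_mult)

subsection \<open>The derivation \<delta>\<close>

lemma delta_add: "delta (p + q) = delta p + delta q"
  by (simp add: delta_def fun_eq_iff sum.distrib)

lemma delta_diff: "delta (p - q) = delta p - delta q"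
  by (simp add: delta_def fun_eq_iff sum_subtractf)

lemma delta_smult: "delta (nc_smult c p) = nc_smult c (delta p)"
  by (simp add: delta_def nc_smult_def fun_eq_iff sum_distrib_left)

lemma delta_zero: "delta 0 = 0"
  by (simp add: delta_def fun_eq_iff)

lemma delta_as_sum: "delta p w = (\<Sum>i<length w. if w ! i = GX then p (w[i := GY]) else 0)"
proof -
  have "{i. i < length w \<and> w ! i = GX} = {i \<in> {..<length w}. w ! i = GX}" by auto
  then have "delta p w = (\<Sum>i\<in>{i \<in> {..<length w}. w ! i = GX}. p (w[i := GY]))"
    by (simp add: delta_def)
  also have "\<dots> = (\<Sum>i<length w. if w ! i = GX then p (w[i := GY]) else 0)"
    by (rule sum.inter_filter) simp
  finally show ?thesis .
qed

lemma delta_nc_mult: "delta (nc_mult p q) = nc_mult (delta p) q + nc_mult p (delta q)"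
proof
  fix w :: "gen list"
  let ?n = "length w"
  define F where "F i j = (if w ! i = GX then p (take j (w[i := GY])) * q (drop j (w[i := GY])) else 0)"
    for i j
  have "delta (nc_mult p q) w = (\<Sum>i<?n. \<Sum>j\<in>{0..?n}. F i j)"
    unfolding delta_as_sum nc_mult_def F_def by (rule sum.cong) simp_all
  also have "\<dots> = (\<Sum>j\<in>{0..?n}. \<Sum>i<?n. F i j)"
    by (rule sum.swap)
  also have "\<dots> = (\<Sum>j\<in>{0..?n}. delta p (take j w) * q (drop j w) + p (take j w) * delta q (drop j w))"
  proof (rule sum.cong[OF refl])
    fix j assume j: "j \<in> {0..?n}"
    \<comment> \<open>positions left of the cut j act on the left factor, the others on the right factor\<close>
    have "(\<Sum>i<?n. F i j) = (\<Sum>i<j. F i j) + (\<Sum>i\<in>{j..<?n}. F i j)"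
      using j by (subst sum.union_disjoint[symmetric]) (auto intro: sum.cong)
    moreover have "(\<Sum>i<j. F i j) = delta p (take j w) * q (drop j w)"
      unfolding delta_as_sum sum_distrib_right using j
      by (intro sum.cong) (auto simp: F_def take_update_swap min_def split: if_split_asm)
    moreover have "(\<Sum>i\<in>{j..<?n}. F i j) = (\<Sum>i\<in>{0 + j..<(?n - j) + j}. F i j)"
      using j by simp
    moreover have "\<dots> = (\<Sum>i\<in>{0..<?n - j}. F (i + j) j)"
      by (rule sum.shift_bounds_nat_ivl)
    moreover have "\<dots> = p (take j w) * delta q (drop j w)"
      unfolding delta_as_sum sum_distrib_left atLeast0LessThan using j
      by (intro sum.cong) (auto simp: F_def drop_update_swap add.commute)
    ultimately show "(\<Sum>i<?n. F i j) = delta p (take j w) * q (drop j w) + p (take j w) * delta q (drop j w)"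
      by simp
  qed
  also have "\<dots> = (nc_mult (delta p) q + nc_mult p (delta q)) w"
    by (simp add: nc_mult_def sum.distrib)
  finally show "delta (nc_mult p q) w = (nc_mult (delta p) q + nc_mult p (delta q)) w" .
qed

lemma delta_lie_bracket: "delta (lie_bracket p q) = lie_bracket (delta p) q + lie_bracket p (delta q)"
  by (simp add: lie_bracket_def delta_diff delta_nc_mult algebra_simps)

lemma delta_xg: "delta xg = 0"
proof -
  have "xg (w[i := GY]) = 0" if "i < length w" for w i
  proof -
    have "GY \<in> set (w[i := GY])" using that by (simp add: set_update_memI)
    then show ?thesis by (auto simp: xg_def nc_gen_def)
  qed
  then show ?thesis by (auto simp: delta_def fun_eq_iff intro!: sum.neutral)
qed

lemma delta_yg: "delta yg = xg"
proof
  fix w :: "gen list"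
  show "delta yg w = xg w"
  proof (cases "w = [GX]")
    case True
    then have "{i. i < length w \<and> w ! i = GX} = {0}" by auto
    with True show ?thesis by (simp add: delta_def xg_def yg_def nc_gen_def)
  next
    case False
    have "w[i := GY] \<noteq> [GY]" if "i < length w" "w ! i = GX" for i
      using that False by (cases w) (auto simp: nth_Cons split: nat.splits)
    then have "delta yg w = 0"
      unfolding delta_def by (intro sum.neutral) (simp add: yg_def nc_gen_def)
    with False show ?thesis by (simp add: xg_def nc_gen_def)
  qed
qed

lemma delta_lie_span_eq_0:
  assumes "\<And>s. s \<in> S \<Longrightarrow> delta s = 0" and "p \<in> lie_span S"
  shows "delta p = 0"
  using assms(2)
proof induction
  case (smult p c)
  then show ?case using delta_smult[of c p] by (simp add: nc_smult_def)
  \<comment> \<open>Not plain simp here: the pointwise simp rules zero_fun_apply and plus_fun_apply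
    would turn 0 and p + q into lambda terms before the linearity lemmas can apply.\<close>
qed (simp_all only: assms(1) delta_zero delta_add delta_lie_bracket
    lie_bracket_zero_left lie_bracket_zero_right add_0)

subsection \<open>The centraliser of x\<close>

lemma xg_nc_mult_Cons:
  fixes v :: "'k::field ncpoly"
  shows "nc_mult xg v (a # w) = (if a = GX then v w else 0)"
proof -
  have summand: "xg (a # take i w) * v (drop i w) = (if i = 0 then (if a = GX then v w else 0) else 0)"
    if "i \<in> {0..length w}" for i
    using that by (auto simp: xg_def nc_gen_def)
  have "nc_mult (\<lambda>u. xg (a # u)) v w
      = (\<Sum>i\<in>{0..length w}. if i = 0 then (if a = GX then v w else 0) else 0)"
    unfolding nc_mult_def by (rule sum.cong) (simp_all only: summand)
  also have "\<dots> = (if a = GX then v w else 0)" by simp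
  finally have "nc_mult (\<lambda>u. xg (a # u)) v w = (if a = GX then v w else 0)" .
  moreover have "(xg :: 'k ncpoly) [] = 0" by (simp add: xg_def nc_gen_def)
  ultimately show ?thesis by (simp add: nc_mult_Cons)
qed

lemma nc_mult_xg_snoc: "nc_mult v xg (w @ [a]) = (if a = GX then v w else 0)"
proof -
  have summand: "v (take i (w @ [a])) * xg (drop i (w @ [a]))
      = (if i = length w then (if a = GX then v w else 0) else 0)"
    if "i \<in> {0..length (w @ [a])}" for i
  proof (cases "i = length w")
    case False
    with that have "length (drop i (w @ [a])) \<noteq> length [GX]" by auto
    then have "drop i (w @ [a]) \<noteq> [GX]" by metis
    then show ?thesis using False by (simp only: xg_def nc_gen_def) simp
  qed (simp add: xg_def nc_gen_def)
  have "nc_mult v xg (w @ [a])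
      = (\<Sum>i\<in>{0..length (w @ [a])}. if i = length w then (if a = GX then v w else 0) else 0)"
    unfolding nc_mult_def by (rule sum.cong) (simp_all only: summand)
  also have "\<dots> = (if a = GX then v w else 0)" by simp
  finally show ?thesis .
qed

lemma lie_bracket_xg_eq_0_vanishes:
  assumes "lie_bracket xg v = 0" and "GY \<in> set w"
  shows "v w = 0"
proof -
  have comm: "nc_mult xg v u = nc_mult v xg u" for u
    using fun_cong[OF assms(1), of u] by (simp add: lie_bracket_def)
  have leading_xs: "v (replicate n GX @ GY # s) = 0" for n s
  proof (induction n arbitrary: s)
    case 0
    have "v (GY # s) = nc_mult v xg ((GY # s) @ [GX])"
      by (simp only: nc_mult_xg_snoc) simp
    also have "\<dots> = nc_mult xg v (GY # s @ [GX])"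
      by (simp add: comm)
    also have "\<dots> = 0"
      by (simp only: xg_nc_mult_Cons) simp
    finally show ?case by simp
  next
    case (Suc n)
    have "v (replicate (Suc n) GX @ GY # s) = nc_mult v xg ((replicate (Suc n) GX @ GY # s) @ [GX])"
      by (simp only: nc_mult_xg_snoc) simp
    also have "\<dots> = nc_mult xg v (GX # replicate n GX @ GY # s @ [GX])"
      by (simp add: comm)
    also have "\<dots> = v (replicate n GX @ GY # s @ [GX])"
      by (simp only: xg_nc_mult_Cons) simp
    also have "\<dots> = 0"
      by (rule Suc.IH)
    finally show ?case .
  qed
  obtain ys zs where w: "w = ys @ GY # zs" and "GY \<notin> set ys"
    using split_list_first[OF assms(2)] by blast
  then have "ys = replicate (length ys) GX"
    by (intro replicate_eqI) (auto intro: gen.exhaust)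
  with w leading_xs show ?thesis by metis
qed

lemma lie_bracket_xg_eq_0_imp_eq_0:
  assumes "lie_bracket xg v = 0" and "y_homogeneous k v" and "0 < k"
  shows "v = 0"
proof (rule ext, rule ccontr)
  fix w assume "v w \<noteq> 0 w"
  then have "v w \<noteq> 0" by simp
  with assms(2) have "count_list w GY = k" by (simp add: y_homogeneous_def)
  with assms(3) have "GY \<in> set w" by (metis count_list_0_iff less_irrefl)
  with assms(1) \<open>v w \<noteq> 0\<close> show False by (simp add: lie_bracket_xg_eq_0_vanishes)
qed

inductive_set nc_span :: "'k::field ncpoly set \<Rightarrow> 'k ncpoly set" for G where
  gen: "g \<in> G \<Longrightarrow> g \<in> nc_span G"
| zero: "0 \<in> nc_span G"
| add: "p \<in> nc_span G \<Longrightarrow> q \<in> nc_span G \<Longrightarrow> p + q \<in> nc_span G"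
| smult: "p \<in> nc_span G \<Longrightarrow> nc_smult c p \<in> nc_span G"

lemma y_trunc_lie_bracket_nc_span:
  assumes gens: "\<And>a b. a \<in> G \<Longrightarrow> b \<in> G \<Longrightarrow> y_trunc k (lie_bracket a b) \<in> nc_span G"
    and "p \<in> nc_span G" and "q \<in> nc_span G"
  shows "y_trunc k (lie_bracket p q) \<in> nc_span G"
proof -
  have left_gen: "y_trunc k (lie_bracket a q) \<in> nc_span G" if "a \<in> G" for a
    using assms(3)
    by induction (simp_all only: gens that lie_bracket_add_right lie_bracket_smult_right
        lie_bracket_zero_right y_trunc_add y_trunc_smult y_trunc_zero nc_span.intros)
  show ?thesis
    using assms(2)
    by induction (simp_all only: left_gen lie_bracket_add_left lie_bracket_smult_left
        lie_bracket_zero_left y_trunc_add y_trunc_smult y_trunc_zero nc_span.intros)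
qed

lemma y_trunc_lie_span_in_nc_span:
  assumes "\<And>s. s \<in> S \<Longrightarrow> y_trunc k s \<in> nc_span G"
    and "\<And>a b. a \<in> G \<Longrightarrow> b \<in> G \<Longrightarrow> y_trunc k (lie_bracket a b) \<in> nc_span G"
    and "p \<in> lie_span S"
  shows "y_trunc k p \<in> nc_span G"
  using assms(3)
proof induction
  case (smult p c)
  show ?case
    unfolding nc_smult_def[symmetric] y_trunc_smult by (rule nc_span.smult[OF smult.IH])
next
  case (bracket p q)
  show ?case
    unfolding y_trunc_lie_bracket[of k p q] by (rule y_trunc_lie_bracket_nc_span[OF assms(2) bracket.IH])
qed (simp_all only: assms(1) y_trunc_add y_trunc_zero nc_span.intros)

subsection \<open>Lie elements of y-degree at most 2\<close>

abbreviation L_x_yx :: "'k::field ncpoly set" where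
  "L_x_yx \<equiv> lie_span {xg, lie_bracket yg xg}"

lemma delta_L_x_yx: "p \<in> L_x_yx \<Longrightarrow> delta p = 0"
  by (rule delta_lie_span_eq_0)
    (auto simp: delta_xg delta_yg delta_lie_bracket)

lemma y_homogeneous_yx: "y_homogeneous 1 (lie_bracket yg xg)"
  using y_homogeneous_lie_bracket[OF y_homogeneous_yg y_homogeneous_xg] by simp

lemma y_homogeneous_yg_bracket: "y_homogeneous 1 v \<Longrightarrow> y_homogeneous 2 (lie_bracket yg v)"
  using y_homogeneous_lie_bracket[OF y_homogeneous_yg] by (metis one_add_one)

definition trunc2_gens :: "'k::field ncpoly set" where
  "trunc2_gens = {xg, yg} \<union> {v \<in> L_x_yx. y_homogeneous 1 v} \<union> {u \<in> L_x_yx. y_homogeneous 2 u}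
    \<union> {lie_bracket yg v | v. v \<in> L_x_yx \<and> y_homogeneous 1 v}"

lemma y_trunc2_L_x_yx_in_span:
  assumes "r \<in> L_x_yx" and "y_homogeneous j r" and "0 < j"
  shows "y_trunc 2 r \<in> nc_span trunc2_gens"
proof (cases "j \<le> 2")
  case True
  with assms(3) have "j = 1 \<or> j = 2" by auto
  with assms(1,2) have "r \<in> trunc2_gens" by (auto simp: trunc2_gens_def)
  with True assms(2) show ?thesis by (simp add: y_trunc_homogeneous_low nc_span.gen)
qed (simp add: y_trunc_homogeneous_high[OF assms(2)] nc_span.zero)

lemma y_trunc2_yg_bracket_in_span:
  assumes "v \<in> L_x_yx" and "y_homogeneous j v" and "0 < j"
  shows "y_trunc 2 (lie_bracket yg v) \<in> nc_span trunc2_gens"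
proof (cases "j = 1")
  case True
  with assms have "lie_bracket yg v \<in> trunc2_gens" by (auto simp: trunc2_gens_def)
  moreover have "y_homogeneous 2 (lie_bracket yg v)"
    using True assms(2) by (simp add: y_homogeneous_yg_bracket)
  ultimately show ?thesis by (simp add: y_trunc_homogeneous_low nc_span.gen)
next
  case False
  have "y_homogeneous (1 + j) (lie_bracket yg v)"
    by (rule y_homogeneous_lie_bracket[OF y_homogeneous_yg assms(2)])
  with False assms(3) show ?thesis by (simp add: y_trunc_homogeneous_high nc_span.zero)
qed

lemma y_trunc2_xg_bracket_in_span:
  assumes "b \<in> trunc2_gens"
  shows "y_trunc 2 (lie_bracket xg b) \<in> nc_span trunc2_gens"
proof -
  have x: "xg \<in> L_x_yx" and yx: "lie_bracket yg xg \<in> L_x_yx"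
    by (auto intro: lie_span.gen)
  have xy: "lie_bracket xg yg = nc_smult (-1) (lie_bracket yg xg)"
    by (rule lie_bracket_antisym)
  have "b = xg \<or> b = yg \<or> (\<exists>j>0. b \<in> L_x_yx \<and> y_homogeneous j b)
      \<or> (\<exists>v. b = lie_bracket yg v \<and> v \<in> L_x_yx \<and> y_homogeneous 1 v)"
    using assms unfolding trunc2_gens_def by (auto intro: exI[of _ 2])
  then consider "b = xg" | "b = yg" | j where "b \<in> L_x_yx" "y_homogeneous j b" "0 < j"
    | v where "b = lie_bracket yg v" "v \<in> L_x_yx" "y_homogeneous 1 v"
    by blast
  then show ?thesis
  proof cases
    case 1
    then show ?thesis by (simp add: nc_span.zero)
  next
    case 2
    have "lie_bracket xg b \<in> L_x_yx" unfolding 2 xy by (intro lie_span_nc_smult yx)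
    moreover have "y_homogeneous 1 (lie_bracket xg b)"
      unfolding 2 xy by (intro y_homogeneous_smult y_homogeneous_yx)
    ultimately show ?thesis by (rule y_trunc2_L_x_yx_in_span) simp
  next
    case 3
    then show ?thesis
      using y_homogeneous_lie_bracket[OF y_homogeneous_xg 3(2)]
      by (intro y_trunc2_L_x_yx_in_span[of _ j] lie_span.bracket x) simp_all
  next
    case 4
    have "lie_bracket xg b = lie_bracket (lie_bracket xg yg) v + lie_bracket yg (lie_bracket xg v)"
      unfolding 4 by (rule lie_bracket_jacobi)
    moreover have "y_trunc 2 (lie_bracket (lie_bracket xg yg) v) \<in> nc_span trunc2_gens"
      using y_homogeneous_lie_bracket[OF y_homogeneous_yx 4(3), unfolded one_add_one] 4(2) unfolding xy
      by (intro y_trunc2_L_x_yx_in_span[of _ 2])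
        (simp_all add: lie_bracket_smult_left y_homogeneous_smult lie_span_nc_smult lie_span.bracket yx)
    moreover have "y_trunc 2 (lie_bracket yg (lie_bracket xg v)) \<in> nc_span trunc2_gens"
      using y_homogeneous_lie_bracket[OF y_homogeneous_xg 4(3)] 4(2)
      by (intro y_trunc2_yg_bracket_in_span[of _ 1] lie_span.bracket x) simp_all
    ultimately show ?thesis by (simp add: y_trunc_add nc_span.add)
  qed
qed

lemma y_trunc2_bracket_in_span:
  assumes "a \<in> trunc2_gens" and "b \<in> trunc2_gens"
  shows "y_trunc 2 (lie_bracket a b) \<in> nc_span trunc2_gens"
proof -
  have swap: "y_trunc 2 (lie_bracket a b) \<in> nc_span trunc2_gens"
    if "y_trunc 2 (lie_bracket b a) \<in> nc_span trunc2_gens"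
    using nc_span.smult[OF that, of "-1"] by (simp add: lie_bracket_antisym[of a b] y_trunc_smult)
  have degrees: "c = xg \<or> (y_homogeneous 1 c \<and> (c = yg \<or> c \<in> L_x_yx)) \<or> y_homogeneous 2 c"
    if "c \<in> trunc2_gens" for c
    using that y_homogeneous_yg_bracket y_homogeneous_yg unfolding trunc2_gens_def by auto
  show ?thesis
  proof (cases "a = xg \<or> b = xg")
    case True
    then show ?thesis
      using y_trunc2_xg_bracket_in_span[OF assms(1)] y_trunc2_xg_bracket_in_span[OF assms(2)] swap
      by auto
  next
    case False
    with degrees[OF assms(1)] degrees[OF assms(2)]
    consider (high) i j where "y_homogeneous i a" "y_homogeneous j b" "2 < i + j"
      | (low) "y_homogeneous 1 a" "a = yg \<or> a \<in> L_x_yx" "y_homogeneous 1 b" "b = yg \<or> b \<in> L_x_yx"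
      by force
    then show ?thesis
    proof cases
      case high
      then show ?thesis
        using y_trunc_homogeneous_high[OF y_homogeneous_lie_bracket[OF high(1,2)]]
        by (simp add: nc_span.zero)
    next
      case low
      have "y_trunc 2 (lie_bracket a b) = lie_bracket a b"
        by (rule y_trunc_homogeneous_low[OF y_homogeneous_lie_bracket[OF low(1,3)]]) simp
      moreover have "y_homogeneous 2 (lie_bracket a b)"
        using y_homogeneous_lie_bracket[OF low(1,3), unfolded one_add_one] .
      ultimately show ?thesis
        using low(2,4) swap y_trunc2_yg_bracket_in_span[of a 1] y_trunc2_yg_bracket_in_span[of b 1]
          y_trunc2_L_x_yx_in_span[of "lie_bracket a b" 2] low(1,3)
        by (auto intro: lie_span.bracket nc_span.zero)
    qed
  qed
qed

lemma y_trunc2_free_lie_in_span: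
  assumes "p \<in> lie_span {xg, yg}"
  shows "y_trunc 2 p \<in> nc_span trunc2_gens"
proof (rule y_trunc_lie_span_in_nc_span[OF _ y_trunc2_bracket_in_span assms])
  fix s :: "'a ncpoly" assume "s \<in> {xg, yg}"
  moreover have "y_trunc 2 xg = xg" "y_trunc 2 yg = yg"
    by (auto intro: y_trunc_homogeneous_low y_homogeneous_xg y_homogeneous_yg)
  ultimately show "y_trunc 2 s \<in> nc_span trunc2_gens"
    by (auto simp: trunc2_gens_def intro: nc_span.gen)
qed

lemma trunc2_gens_normal_form:
  assumes "g \<in> trunc2_gens"
  shows "\<exists>a b v t. g = nc_smult a xg + nc_smult b yg + lie_bracket yg v + t
    \<and> v \<in> L_x_yx \<and> y_homogeneous 1 v \<and> t \<in> L_x_yx"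
proof -
  from assms consider "g = xg" | "g = yg" | "g \<in> L_x_yx"
    | v where "g = lie_bracket yg v" "v \<in> L_x_yx" "y_homogeneous 1 v"
    unfolding trunc2_gens_def by blast
  then show ?thesis
  proof cases
    case 1
    then have "g = nc_smult 1 xg + nc_smult 0 yg + lie_bracket yg 0 + 0" by simp
    then show ?thesis using lie_span.zero y_homogeneous_zero by blast
  next
    case 2
    then have "g = nc_smult 0 xg + nc_smult 1 yg + lie_bracket yg 0 + 0" by simp
    then show ?thesis using lie_span.zero y_homogeneous_zero by blast
  next
    case 3
    have "g = nc_smult 0 xg + nc_smult 0 yg + lie_bracket yg 0 + g" by simp
    then show ?thesis using 3 lie_span.zero y_homogeneous_zero by blast
  next
    case 4
    then have "g = nc_smult 0 xg + nc_smult 0 yg + lie_bracket yg v + 0" by simp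
    then show ?thesis using 4 lie_span.zero by blast
  qed
qed

lemma nc_span_trunc2_gens_normal_form:
  assumes "p \<in> nc_span trunc2_gens"
  shows "\<exists>a b v t. p = nc_smult a xg + nc_smult b yg + lie_bracket yg v + t
    \<and> v \<in> L_x_yx \<and> y_homogeneous 1 v \<and> t \<in> L_x_yx"
  using assms
proof induction
  case (gen g)
  then show ?case by (rule trunc2_gens_normal_form)
next
  case zero
  have "0 = nc_smult 0 xg + nc_smult 0 yg + lie_bracket yg 0 + (0 :: 'a ncpoly)" by simp
  then show ?case using lie_span.zero y_homogeneous_zero by blast
next
  case (add p q)
  then obtain a b v t a' b' v' t' where
    p: "p = nc_smult a xg + nc_smult b yg + lie_bracket yg v + t" "v \<in> L_x_yx" "y_homogeneous 1 v" "t \<in> L_x_yx"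
    and q: "q = nc_smult a' xg + nc_smult b' yg + lie_bracket yg v' + t'" "v' \<in> L_x_yx" "y_homogeneous 1 v'" "t' \<in> L_x_yx"
    by blast
  have "p + q = nc_smult (a + a') xg + nc_smult (b + b') yg + lie_bracket yg (v + v') + (t + t')"
    unfolding p(1) q(1) lie_bracket_add_right by (simp add: nc_smult_def fun_eq_iff algebra_simps)
  with p q show ?case
    by (blast intro: lie_span.add y_homogeneous_add)
next
  case (smult p c)
  then obtain a b v t where
    p: "p = nc_smult a xg + nc_smult b yg + lie_bracket yg v + t" "v \<in> L_x_yx" "y_homogeneous 1 v" "t \<in> L_x_yx"
    by blast
  have "nc_smult c p = nc_smult (c * a) xg + nc_smult (c * b) yg + lie_bracket yg (nc_smult c v) + nc_smult c t"
    unfolding p(1) lie_bracket_smult_right by (simp add: nc_smult_def fun_eq_iff algebra_simps)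
  with p show ?case
    by (blast intro: lie_span_nc_smult y_homogeneous_smult)
qed

lemma delta_eq_0_imp_in_L_x_yx:
  assumes "p \<in> nc_span trunc2_gens" and "delta p = 0"
  shows "p \<in> L_x_yx"
proof -
  obtain a b v t where p: "p = nc_smult a xg + nc_smult b yg + lie_bracket yg v + t"
    and v: "v \<in> L_x_yx" "y_homogeneous 1 v" and t: "t \<in> L_x_yx"
    using nc_span_trunc2_gens_normal_form[OF assms(1)] by blast
  have "delta p = nc_smult b xg + lie_bracket xg v"
    unfolding p
    by (simp add: delta_add delta_smult delta_xg delta_yg delta_lie_bracket
        delta_L_x_yx[OF v(1)] delta_L_x_yx[OF t])
  with assms(2) have sum0: "nc_smult b xg + lie_bracket xg v = 0" by simp
  have "lie_bracket xg v [GX] = 0"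
    using y_homogeneous_lie_bracket[OF y_homogeneous_xg v(2)] by (auto simp: y_homogeneous_def)
  with fun_cong[OF sum0, of "[GX]"] have "b = 0"
    by (simp add: nc_smult_def xg_def nc_gen_def)
  with sum0 have "lie_bracket xg v = 0" by simp
  then have "v = 0"
    using v(2) by (rule lie_bracket_xg_eq_0_imp_eq_0) simp
  with p \<open>b = 0\<close> have "p = nc_smult a xg + t" by simp
  with t show ?thesis
    by (auto intro: lie_span.add lie_span_nc_smult lie_span.gen)
qed

theorem corollary5p2:
  fixes f :: "'k::field_char_0 ncpoly"
  assumes "f \<in> free_lie" and "deg_y f = 2"
  shows "delta f = 0 \<longleftrightarrow> f \<in> lie_span {xg, lie_bracket yg xg}"
proof
  assume "delta f = 0"
  have f: "f \<in> lie_span {xg, yg}"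
    using assms(1) by (simp add: free_lie_def)
  have "finite {w. f w \<noteq> 0}"
    by (rule lie_span_finite_support[OF _ f]) (auto simp: xg_def yg_def nc_gen_def)
  with assms(2) have "y_trunc 2 f = f"
    by (simp add: y_trunc_eq_self)
  with y_trunc2_free_lie_in_span[OF f] have "f \<in> nc_span trunc2_gens"
    by simp
  then show "f \<in> L_x_yx"
    using \<open>delta f = 0\<close> by (rule delta_eq_0_imp_in_L_x_yx)
next
  assume "f \<in> L_x_yx"
  then show "delta f = 0" by (rule delta_L_x_yx)
qed

end
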